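(* Let $A=(i_1,\dots,i_a)$ be an ordered tuple of distinct elements of $I_d$, $\alpha\in\mathbb{Z}_2^{a,\mathrm{ev}}$, $r\ge0$, and put $\overrightarrow{A}=(i_a,i_1,\dots,i_{a-1})$, $\overrightarrow{\alpha}=(\alpha_a,\alpha_1,\dots,\alpha_{a-1})$. Then in $\mathcal{G}$, $$\overrightarrow{A}^{(r,\overrightarrow{\alpha})}=(-1)^{\alpha_a((a-1)(l-1)+r+1)}A^{(r,\alpha)}.$$
   Context: Fix a commutative ring $R$ and integers $l,d\ge1$; $I_a=\{1,\dots,a\}$. Let $\mathcal{G}$ be the $R$-superalgebra that is free as an $R$-module with basis $\{x_1^{m_1}\cdots x_d^{m_d}\,w\,c_1^{e_1}\cdots c_d^{e_d}: 0\le m_i\le l-1,\ w\in\Sigma_d,\ e_i\in\{0,1\}\}$, with multiplication determined by: the $x_i$ commute and $x_i^l=0$; $w\in\Sigma_d$ multiply as in the symmetric group (composition right to left); $c_i^2=1$, $c_ic_j=-c_jc_i$ for $i\ne j$; $wx_i=x_{w(i)}w$, $wc_i=c_{w(i)}w$; $x_ic_i=-c_ix_i$, $x_ic_j=c_jx_i$ for $i\ne j$. For an ordered tuple $A=(i_1,\dots,i_a)$ of distinct elements of $I_d$, $\sigma_A$ is the cycle $i_1\mapsto i_2\mapsto\dots\mapsto i_a\mapsto i_1$. For $\alpha\in\mathbb{Z}_2^a$: $|\alpha|=\sum_j\alpha_j$; $\mathbb{Z}_2^{a,\mathrm{ev}}$ is the set of $\alpha$ with $|\alpha|$ even; $c_\alpha(A)=c_{i_1}^{\alpha_1}\cdots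 c_{i_a}^{\alpha_a}$; $\epsilon^\alpha_j=\prod_{k<j}(-1)^{\alpha_k}$. For $r\ge0$, $\alpha\in\mathbb{Z}_2^{a,\mathrm{ev}}$: $h^\alpha_r(A)=\sum_{r_1+\dots+r_a=(a-1)(l-1)+r,\ r_j\ge0}\prod_j(\epsilon^\alpha_jx_{i_j})^{r_j}$ and $A^{(r,\alpha)}=h^\alpha_r(A)\sigma_Ac_\alpha(A)$. *)

theory Defs
  imports "HOL-Combinatorics.Cycles"
begin

text \<open>The superalgebra G (depending on l, d), over a commutative ring 'r, realised
 concretely as the free 'r-module on the basis monomials x^m w c^S, i.e. as functions
 from basis triples (m, w, S) to coefficients that vanish outside the valid basis.
 Here m : exponents of x_1..x_d (each < l), w : permutation of {1..d},
 S : the set of indices i with e_i = 1 (c^S = product of c_i, i in S, increasing order).\<close>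

type_synonym gbasis = "(nat \<Rightarrow> nat) \<times> (nat \<Rightarrow> nat) \<times> nat set"
type_synonym 'r gelem = "gbasis \<Rightarrow> 'r"

definition valid_basis :: "nat \<Rightarrow> nat \<Rightarrow> gbasis \<Rightarrow> bool" where
  "valid_basis l d b = (case b of (m, w, S) \<Rightarrow>
     (\<forall>i. (i \<in> {1..d} \<longrightarrow> m i < l) \<and> (i \<notin> {1..d} \<longrightarrow> m i = 0))
     \<and> w permutes {1..d} \<and> S \<subseteq> {1..d})"

definition Gbasis :: "nat \<Rightarrow> nat \<Rightarrow> gbasis set" where
  "Gbasis l d = {b. valid_basis l d b}"

text \<open>Right multiplication of a normal-form Clifford monomial (sign, c^T) by a generator c_j:
  c^T c_j = (-1)^{#{i in T. i > j}} c^{T sym-diff {j}}.\<close>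
definition cmul_gen :: "int \<times> nat set \<Rightarrow> nat \<Rightarrow> int \<times> nat set" where
  "cmul_gen st j = (case st of (s, T) \<Rightarrow>
     (s * (-1) ^ card {i \<in> T. i > j}, if j \<in> T then T - {j} else insert j T))"

definition cword :: "nat list \<Rightarrow> int \<times> nat set" where
  "cword js = foldl cmul_gen (1, {}) js"

text \<open>Product of basis monomials:
  x^m w c^S * x^m' w' c^S' = (-1)^{sum_{i in S} m'_i} x^{m + m' o w^-1} (w o w')
     * c_{w'^-1 s_1} ... c_{w'^-1 s_k} c^S'   (s_1 < ... < s_k the elements of S);
  it is zero if some exponent reaches l.\<close>
definition bmul :: "nat \<Rightarrow> nat \<Rightarrow> gbasis \<Rightarrow> gbasis \<Rightarrow> (int \<times> gbasis) option" where
  "bmul l d b1 b2 = (case b1 of (m, w, S) \<Rightarrow> case b2 of (m', w', S') \<Rightarrow>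
     (let s1 = (-1::int) ^ (\<Sum>i\<in>S. m' i);
          m'' = (\<lambda>j. m j + m' (inv w j));
          (s2, T) = cword (map (inv w') (sorted_list_of_set S) @ sorted_list_of_set S')
      in if (\<forall>j\<in>{1..d}. m'' j < l) then Some (s1 * s2, (m'', w \<circ> w', T)) else None))"

definition gmul :: "nat \<Rightarrow> nat \<Rightarrow> ('r::comm_ring_1) gelem \<Rightarrow> 'r gelem \<Rightarrow> 'r gelem" where
  "gmul l d f g = (\<lambda>b. \<Sum>b1\<in>Gbasis l d. \<Sum>b2\<in>Gbasis l d.
     (case bmul l d b1 b2 of None \<Rightarrow> 0
       | Some (s, b') \<Rightarrow> if b' = b then of_int s * f b1 * g b2 else 0))"

definition gsmul :: "'r::comm_ring_1 \<Rightarrow> 'r gelem \<Rightarrow> 'r gelem" where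
  "gsmul c f = (\<lambda>b. c * f b)"

definition gmono :: "nat \<Rightarrow> nat \<Rightarrow> gbasis \<Rightarrow> ('r::comm_ring_1) gelem" where
  "gmono l d b = (\<lambda>b'. if b' = b \<and> valid_basis l d b then 1 else 0)"

definition gone :: "nat \<Rightarrow> nat \<Rightarrow> ('r::comm_ring_1) gelem" where
  "gone l d = gmono l d (\<lambda>_. 0, id, {})"

definition gx :: "nat \<Rightarrow> nat \<Rightarrow> nat \<Rightarrow> ('r::comm_ring_1) gelem" where
  "gx l d i = gmono l d (\<lambda>j. if j = i then 1 else 0, id, {})"

definition gperm :: "nat \<Rightarrow> nat \<Rightarrow> (nat \<Rightarrow> nat) \<Rightarrow> ('r::comm_ring_1) gelem" where
  "gperm l d w = gmono l d (\<lambda>_. 0, w, {})"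

definition gc :: "nat \<Rightarrow> nat \<Rightarrow> nat \<Rightarrow> ('r::comm_ring_1) gelem" where
  "gc l d i = gmono l d (\<lambda>_. 0, id, {i})"

definition gpow :: "nat \<Rightarrow> nat \<Rightarrow> ('r::comm_ring_1) gelem \<Rightarrow> nat \<Rightarrow> 'r gelem" where
  "gpow l d f n = (gmul l d f ^^ n) (gone l d)"

definition gprod_list :: "nat \<Rightarrow> nat \<Rightarrow> ('r::comm_ring_1) gelem list \<Rightarrow> 'r gelem" where
  "gprod_list l d fs = foldr (gmul l d) fs (gone l d)"

definition gsum :: "'i set \<Rightarrow> ('i \<Rightarrow> ('r::comm_ring_1) gelem) \<Rightarrow> 'r gelem" where
  "gsum X F = (\<lambda>b. \<Sum>x\<in>X. F x b)"

text \<open>Tuples A are lists of distinct indices; alpha in Z_2^a is a bool list.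
 eps alpha j (0-based j) = prod_{k<j} (-1)^{alpha_k}.\<close>
definition eps :: "bool list \<Rightarrow> nat \<Rightarrow> 'r::comm_ring_1" where
  "eps \<alpha> j = (-1) ^ length (filter id (take j \<alpha>))"

definition hA :: "nat \<Rightarrow> nat \<Rightarrow> nat \<Rightarrow> nat list \<Rightarrow> bool list \<Rightarrow> ('r::comm_ring_1) gelem" where
  "hA l d r A \<alpha> = gsum {rs. length rs = length A \<and> sum_list rs = (length A - 1) * (l - 1) + r}
     (\<lambda>rs. gprod_list l d
        (map (\<lambda>j. gpow l d (gsmul (eps \<alpha> j) (gx l d (A ! j))) (rs ! j)) [0..<length A]))"

definition c_alpha :: "nat \<Rightarrow> nat \<Rightarrow> nat list \<Rightarrow> bool list \<Rightarrow> ('r::comm_ring_1) gelem" where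
  "c_alpha l d A \<alpha> = gprod_list l d
     (map (\<lambda>j. if \<alpha> ! j then gc l d (A ! j) else gone l d) [0..<length A])"

text \<open>sigma_A = cycle i_1 -> i_2 -> ... -> i_a -> i_1 (cycle_of_list).\<close>
definition Apow :: "nat \<Rightarrow> nat \<Rightarrow> nat \<Rightarrow> nat list \<Rightarrow> bool list \<Rightarrow> ('r::comm_ring_1) gelem" where
  "Apow l d r A \<alpha> = gmul l d (gmul l d (hA l d r A \<alpha>) (gperm l d (cycle_of_list A))) (c_alpha l d A \<alpha>)"

end

theory Submission
  imports Defs
begin

text \<open>The permutation \<open>\<sigma>\<^sub>A\<close> does not change when \<open>A\<close> is rotated, so only the two
 remaining factors contribute signs.  In \<open>h\<^sup>\<alpha>\<^sub>r(A)\<close>, reindex the sum over compositions by the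
 same rotation: every \<open>\<epsilon>\<close>-sign except the first is multiplied by \<open>(-1)\<^sup>\<alpha>\<^sub>a\<close>, while the new
 last sign \<open>\<epsilon>\<^sup>\<alpha>\<^sub>a = (-1)\<^bsup>|\<alpha>| - \<alpha>\<^sub>a\<^esup>\<close> also equals \<open>(-1)\<^sup>\<alpha>\<^sub>a\<close> because \<open>|\<alpha>|\<close> is even; hence every
 monomial, of total degree \<open>(a-1)(l-1)+r\<close>, acquires the sign \<open>(-1)\<^bsup>\<alpha>\<^sub>a((a-1)(l-1)+r)\<^esup>\<close>.  In
 \<open>c\<^sub>\<alpha>(A)\<close>, moving \<open>c\<^sub>i\<^sub>a\<close> from the front to the back passes the odd number \<open>|\<alpha>| - 1\<close> of
 anticommuting generators, which contributes one more factor \<open>(-1)\<^sup>\<alpha>\<^sub>a\<close>.\<close>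

section \<open>Linear structure of the algebra\<close>

lemma finite_Gbasis: "finite (Gbasis l d)"
proof -
  have "Gbasis l d \<subseteq> {m. \<forall>x. (x \<in> {1..d} \<longrightarrow> m x \<in> {..<l}) \<and> (x \<notin> {1..d} \<longrightarrow> m x = 0)}
      \<times> {w. w permutes {1..d}} \<times> Pow {1..d}"
    by (auto simp: Gbasis_def valid_basis_def)
  moreover have "finite ({m. \<forall>x. (x \<in> {1..d} \<longrightarrow> m x \<in> {..<l}) \<and> (x \<notin> {1..d} \<longrightarrow> m x = (0::nat))}
      \<times> {w. w permutes {1..d}} \<times> Pow {1..d})"
    by (intro finite_cartesian_product finite_set_of_finite_funs finite_permutations) auto
  ultimately show ?thesis by (rule finite_subset)
qed

lemma gmul_gsmul_left: "gmul l d (gsmul c f) g = gsmul c (gmul l d f g)"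
  unfolding gmul_def gsmul_def
  by (rule ext) (simp add: sum_distrib_left, intro sum.cong refl, auto simp: mult_ac split: option.split)

lemma gmul_gsmul_right: "gmul l d f (gsmul c g) = gsmul c (gmul l d f g)"
  unfolding gmul_def gsmul_def
  by (rule ext) (simp add: sum_distrib_left, intro sum.cong refl, auto simp: mult_ac split: option.split)

lemma gsmul_gsmul: "gsmul a (gsmul b f) = gsmul (a * b) f"
  by (simp add: gsmul_def mult_ac)

lemma gsmul_one: "gsmul 1 f = f"
  by (simp add: gsmul_def)

lemma gmul_zero_left: "gmul l d (\<lambda>_. 0) g = (\<lambda>_. 0)"
  unfolding gmul_def by (rule ext) (rule sum.neutral, auto intro!: sum.neutral split: option.split)

lemma gmul_zero_right: "gmul l d f (\<lambda>_. 0) = (\<lambda>_. 0)"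
  unfolding gmul_def by (rule ext) (rule sum.neutral, auto intro!: sum.neutral split: option.split)

lemma gmono_invalid: "\<not> valid_basis l d b \<Longrightarrow> gmono l d b = (\<lambda>_. 0)"
  by (auto simp: gmono_def)

lemma gmul_gmono:
  assumes "valid_basis l d b1" "valid_basis l d b2"
  shows "(gmul l d (gmono l d b1) (gmono l d b2) :: 'r::comm_ring_1 gelem) =
    (\<lambda>b. case bmul l d b1 b2 of None \<Rightarrow> 0 | Some (s, b') \<Rightarrow> if b' = b then of_int s else 0)"
proof (rule ext)
  fix b
  define C where "C = (case bmul l d b1 b2 of None \<Rightarrow> 0 | Some (s, b') \<Rightarrow> if b' = b then (of_int s::'r) else 0)"
  have summand: "\<And>x y. (case bmul l d x y of None \<Rightarrow> 0
      | Some (s, b') \<Rightarrow> if b' = b then of_int s * gmono l d b1 x * (gmono l d b2 y::'r) else 0)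
     = (if x = b1 then (if y = b2 then C else 0) else 0)"
    by (auto simp: gmono_def assms C_def split: option.split)
  have inner: "\<And>x. (\<Sum>y\<in>Gbasis l d. if x = b1 then (if y = b2 then C else 0) else 0) = (if x = b1 then C else 0)"
    using finite_Gbasis[of l d] assms(2) by (simp add: Gbasis_def)
  have "gmul l d (gmono l d b1) (gmono l d b2) b = (\<Sum>x\<in>Gbasis l d. if x = b1 then C else 0)"
    unfolding gmul_def summand inner ..
  also have "\<dots> = C" using finite_Gbasis[of l d] assms(1) by (simp add: Gbasis_def)
  finally show "(gmul l d (gmono l d b1) (gmono l d b2) b :: 'r) =
      (case bmul l d b1 b2 of None \<Rightarrow> 0 | Some (s, b') \<Rightarrow> if b' = b then of_int s else 0)"
    unfolding C_def .
qed

lemma gsum_reindex: "bij_betw h X Y \<Longrightarrow> gsum X (\<lambda>x. F (h x)) = gsum Y F"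
  unfolding gsum_def by (rule ext) (rule sum.reindex_bij_betw)

lemma gsum_cong: "(\<And>x. x \<in> X \<Longrightarrow> F x = G x) \<Longrightarrow> gsum X F = gsum X G"
  unfolding gsum_def by (rule ext) (rule sum.cong, auto)

lemma gsum_gsmul: "gsum X (\<lambda>x. gsmul c (F x)) = gsmul c (gsum X F)"
  unfolding gsum_def gsmul_def by (rule ext) (simp add: sum_distrib_left)

section \<open>The polynomial part\<close>

lemma valid_basis_xmono:
  "(\<forall>i. i \<notin> {1..d} \<longrightarrow> m i = 0) \<Longrightarrow> valid_basis l d (m, id, {}) = (\<forall>i\<in>{1..d}. m i < l)"
  by (auto simp: valid_basis_def permutes_id)

lemma gmul_xmono:
  assumes "\<forall>i. i \<notin> {1..d} \<longrightarrow> m i = 0" "\<forall>i. i \<notin> {1..d} \<longrightarrow> m' i = 0"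
  shows "(gmul l d (gmono l d (m, id, {})) (gmono l d (m', id, {})) :: 'r::comm_ring_1 gelem)
     = gmono l d (\<lambda>j. m j + m' j, id, {})"
proof -
  have sum_support: "\<forall>i. i \<notin> {1..d} \<longrightarrow> m i + m' i = 0" using assms by auto
  show ?thesis
  proof (cases "valid_basis l d (m, id, {}) \<and> valid_basis l d (m', id, {})")
    case True
    then have v1: "valid_basis l d (m, id, {})" and v2: "valid_basis l d (m', id, {})" by auto
    have "bmul l d (m, id, {}) (m', id, {}) =
        (if \<forall>j\<in>{1..d}. m j + m' j < l then Some (1, (\<lambda>j. m j + m' j, id, {})) else None)"
      by (simp add: bmul_def cword_def inv_id)
    then show ?thesis
      unfolding gmul_gmono[OF v1 v2]
      using valid_basis_xmono[OF sum_support]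
      by (cases "\<forall>j\<in>{1..d}. m j + m' j < l") (auto simp: gmono_def intro!: ext, force)
  next
    case False
    then have "\<not> valid_basis l d (\<lambda>j. m j + m' j, id, {})"
      using valid_basis_xmono[OF sum_support] valid_basis_xmono[OF assms(1)]
        valid_basis_xmono[OF assms(2)] by force
    with False show ?thesis
      by (auto simp: gmono_invalid gmul_zero_left gmul_zero_right)
  qed
qed

lemma gpow_gsmul_gx:
  assumes "i \<in> {1..d}"
  shows "(gpow l d (gsmul e (gx l d i)) n :: 'r::comm_ring_1 gelem)
    = gsmul (e ^ n) (gmono l d (\<lambda>j. if j = i then n else 0, id, {}))"
proof (induction n)
  case 0
  then show ?case by (simp add: gpow_def gone_def gsmul_one id_def)
next
  case (Suc n)
  have "gpow l d (gsmul e (gx l d i)) (Suc n)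
      = gmul l d (gsmul e (gx l d i)) (gpow l d (gsmul e (gx l d i)) n)"
    by (simp add: gpow_def)
  also have "\<dots> = gsmul (e * e ^ n) (gmul l d (gmono l d (\<lambda>j. if j = i then 1 else 0, id, {}))
      (gmono l d (\<lambda>j. if j = i then n else 0, id, {})))"
    unfolding Suc.IH
    by (simp only: gx_def gmul_gsmul_left gmul_gsmul_right gsmul_gsmul, simp add: mult.commute)
  also have "\<dots> = gsmul (e ^ Suc n) (gmono l d (\<lambda>j. if j = i then Suc n else 0, id, {}))"
    by (subst gmul_xmono)
      (use assms in \<open>auto intro!: arg_cong[where f="\<lambda>m. gsmul _ (gmono l d (m, id, {}))"]\<close>)
  finally show ?case .
qed

lemma foldr_gmul_xmono:
  assumes "\<forall>k\<in>set js. \<forall>i. i \<notin> {1..d} \<longrightarrow> M k i = 0" "\<forall>i. i \<notin> {1..d} \<longrightarrow> m0 i = 0"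
  shows "foldr (gmul l d) (map (\<lambda>k. gsmul (c k) (gmono l d (M k, id, {}))) js)
      (gsmul c0 (gmono l d (m0, id, {})))
    = (gsmul (c0 * prod_list (map c js))
        (gmono l d (\<lambda>i. m0 i + sum_list (map (\<lambda>k. M k i) js), id, {})) :: 'r::comm_ring_1 gelem)"
  using assms(1)
proof (induction js)
  case Nil
  then show ?case by simp
next
  case (Cons k js)
  have support: "\<forall>i. i \<notin> {1..d} \<longrightarrow> m0 i + sum_list (map (\<lambda>k. M k i) js) = 0"
    using Cons.prems assms(2) by (auto simp: sum_list_eq_0_iff)
  have "foldr (gmul l d) (map (\<lambda>k. gsmul (c k) (gmono l d (M k, id, {}))) (k # js))
      (gsmul c0 (gmono l d (m0, id, {})))
    = gmul l d (gsmul (c k) (gmono l d (M k, id, {})))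
        (gsmul (c0 * prod_list (map c js))
          (gmono l d (\<lambda>i. m0 i + sum_list (map (\<lambda>k. M k i) js), id, {})))"
    using Cons by (simp add: id_def)
  also have "\<dots> = gsmul (c k * (c0 * prod_list (map c js)))
      (gmono l d (\<lambda>i. M k i + (m0 i + sum_list (map (\<lambda>k. M k i) js)), id, {}))"
    unfolding gmul_gsmul_left gmul_gsmul_right gsmul_gsmul
    by (subst gmul_xmono) (use Cons.prems support in \<open>auto simp: ac_simps\<close>)
  finally show ?case by (simp add: ac_simps id_def)
qed

definition multidegree :: "nat list \<Rightarrow> nat list \<Rightarrow> nat \<Rightarrow> nat" where
  "multidegree A rs = (\<lambda>i. \<Sum>j<length A. if i = A ! j then rs ! j else 0)"

definition eps_weight :: "bool list \<Rightarrow> nat list \<Rightarrow> 'r::comm_ring_1" where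
  "eps_weight \<alpha> rs = (\<Prod>j<length rs. eps \<alpha> j ^ (rs ! j))"

lemma gprod_list_gpow_gx:
  assumes "set A \<subseteq> {1..d}" "length rs = length A"
  shows "(gprod_list l d (map (\<lambda>j. gpow l d (gsmul (eps \<alpha> j) (gx l d (A ! j))) (rs ! j)) [0..<length A])
      :: 'r::comm_ring_1 gelem)
    = gsmul (eps_weight \<alpha> rs) (gmono l d (multidegree A rs, id, {}))"
proof -
  have powers: "map (\<lambda>j. gpow l d (gsmul (eps \<alpha> j) (gx l d (A ! j))) (rs ! j)) [0..<length A]
     = map (\<lambda>j. gsmul (eps \<alpha> j ^ (rs ! j)) (gmono l d (\<lambda>i. if i = A ! j then rs ! j else 0, id, {})))
         [0..<length A]"
    using assms by (intro map_cong refl gpow_gsmul_gx) (auto dest!: nth_mem)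
  have one: "(gone l d :: 'r gelem) = gsmul 1 (gmono l d (\<lambda>_. 0, id, {}))"
    by (simp add: gone_def gsmul_one)
  have "(gprod_list l d (map (\<lambda>j. gpow l d (gsmul (eps \<alpha> j) (gx l d (A ! j))) (rs ! j)) [0..<length A])
      :: 'r gelem)
    = gsmul (1 * prod_list (map (\<lambda>j. eps \<alpha> j ^ (rs ! j)) [0..<length A]))
        (gmono l d (\<lambda>i. 0 + sum_list (map (\<lambda>j. if i = A ! j then rs ! j else 0) [0..<length A]), id, {}))"
    unfolding gprod_list_def powers one
    by (rule foldr_gmul_xmono) (use assms in \<open>auto dest!: nth_mem\<close>)
  also have "\<dots> = gsmul (eps_weight \<alpha> rs) (gmono l d (multidegree A rs, id, {}))"
    using assms(2) by (simp add: eps_weight_def multidegree_def prod.distinct_set_conv_list[symmetric]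
        interv_sum_list_conv_sum_set_nat lessThan_atLeast0)
  finally show ?thesis .
qed

definition compositions :: "nat \<Rightarrow> nat \<Rightarrow> nat list set" where
  "compositions n N = {rs. length rs = n \<and> sum_list rs = N}"

lemma hA_eq_gsum_compositions:
  assumes "set A \<subseteq> {1..d}"
  shows "(hA l d r A \<alpha> :: 'r::comm_ring_1 gelem) =
    gsum (compositions (length A) ((length A - 1) * (l - 1) + r))
      (\<lambda>rs. gsmul (eps_weight \<alpha> rs) (gmono l d (multidegree A rs, id, {})))"
  unfolding hA_def compositions_def
  by (rule gsum_cong) (simp add: gprod_list_gpow_gx[OF assms])

lemma bij_betw_rotate_compositions:
  "bij_betw (\<lambda>rs. last rs # butlast rs) (compositions (Suc n) N) (compositions (Suc n) N)"
  unfolding compositions_def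
proof (rule bij_betw_byWitness[where f'="\<lambda>rs. tl rs @ [hd rs]"])
  have rotate_sum: "sum_list (last rs # butlast rs) = sum_list rs" if "rs \<noteq> []" for rs :: "nat list"
    using that by (metis append_butlast_last_id add.commute sum_list.Cons sum_list_append
        sum_list.Nil add_0_right)
  show "(\<lambda>rs. last rs # butlast rs) ` {rs. length rs = Suc n \<and> sum_list rs = N}
      \<subseteq> {rs. length rs = Suc n \<and> sum_list rs = N}"
    by (auto simp del: sum_list.Cons intro!: rotate_sum)
  show "(\<lambda>rs. tl rs @ [hd rs]) ` {rs. length rs = Suc n \<and> sum_list rs = N}
      \<subseteq> {rs. length rs = Suc n \<and> sum_list rs = N}"
    by (clarsimp, metis list.collapse list.size(3) nat.simps(3) sum_list.Cons add.commute)
qed (auto intro: append_butlast_last_id intro!: list.collapse)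

lemma eps_Cons_0: "(eps (b # \<alpha>) 0 :: 'r::comm_ring_1) = 1"
  by (simp add: eps_def)

lemma eps_Cons_Suc: "(eps (b # \<alpha>) (Suc j) :: 'r::comm_ring_1) = (-1) ^ of_bool b * eps \<alpha> j"
  by (simp add: eps_def power_add)

lemma eps_append: "j \<le> length \<alpha> \<Longrightarrow> (eps (\<alpha> @ \<beta>) j :: 'r::comm_ring_1) = eps \<alpha> j"
  by (simp add: eps_def)

text \<open>The rotated signs differ by \<open>(-1)\<^sup>b\<close> in every position, the first one included, since
 \<open>eps \<alpha>' (length \<alpha>') = (-1)\<^sup>b\<close> when \<open>\<alpha>' @ [b]\<close> has even weight.\<close>
lemma eps_weight_rotate:
  assumes "length rs = length \<alpha>'" "even (length (filter id (\<alpha>' @ [b])))"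
  shows "(eps_weight (b # \<alpha>') (k # rs) :: 'r::comm_ring_1)
    = (-1) ^ (of_bool b * (sum_list rs + k)) * eps_weight (\<alpha>' @ [b]) (rs @ [k])"
proof -
  define x :: 'r where "x = (-1) ^ of_bool b"
  have last_sign: "(eps \<alpha>' (length \<alpha>') :: 'r) = x"
    using assms by (cases b) (auto simp: eps_def x_def)
  have "(eps_weight (b # \<alpha>') (k # rs) :: 'r) = x ^ sum_list rs * (\<Prod>j<length rs. eps \<alpha>' j ^ (rs ! j))"
    unfolding eps_weight_def length_Cons
    by (subst prod.lessThan_Suc_shift) (simp add: eps_Cons_0 eps_Cons_Suc x_def power_mult_distrib
        prod.distrib power_sum sum_list_sum_nth atLeast0LessThan)
  moreover have "eps_weight (\<alpha>' @ [b]) (rs @ [k]) = (\<Prod>j<length rs. (eps \<alpha>' j :: 'r) ^ (rs ! j)) * x ^ k"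
    unfolding eps_weight_def using assms(1)
    by (simp add: prod.lessThan_Suc eps_append nth_append last_sign)
  moreover have "x ^ k * x ^ k = 1"
    by (simp add: x_def flip: power_add)
  then have "x ^ sum_list rs = x ^ (sum_list rs + k) * x ^ k"
    by (simp add: power_add mult.assoc)
  ultimately show ?thesis
    by (simp add: x_def power_mult ac_simps)
qed

lemma multidegree_rotate:
  assumes "length rs = length A"
  shows "multidegree (y # A) (k # rs) = multidegree (A @ [y]) (rs @ [k])"
  using assms unfolding multidegree_def length_Cons length_append_singleton
  by (subst sum.lessThan_Suc_shift) (auto simp: nth_append add.commute intro!: ext sum.cong)

lemma hA_rotate:
  assumes "set (A @ [y]) \<subseteq> {1..d}" "length \<alpha> = length A" "even (length (filter id (\<alpha> @ [b])))"
  shows "(hA l d r (y # A) (b # \<alpha>) :: 'r::comm_ring_1 gelem)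
    = gsmul ((-1) ^ (of_bool b * (length A * (l - 1) + r))) (hA l d r (A @ [y]) (\<alpha> @ [b]))"
proof -
  define N where "N = length A * (l - 1) + r"
  define X where "X = compositions (Suc (length A)) N"
  define T where "T = (\<lambda>B \<beta> rs. gsmul (eps_weight \<beta> rs) (gmono l d (multidegree B rs, id, {})) :: 'r gelem)"
  have hA_as_gsum: "hA l d r B \<beta> = gsum X (T B \<beta>)"
    if "set B \<subseteq> {1..d}" "length B = Suc (length A)" for B \<beta>
    using that by (simp add: hA_eq_gsum_compositions X_def T_def N_def)
  have "(hA l d r (y # A) (b # \<alpha>) :: 'r gelem) = gsum X (T (y # A) (b # \<alpha>))"
    using assms(1) by (simp add: hA_as_gsum)
  also have "\<dots> = gsum X (\<lambda>rs. T (y # A) (b # \<alpha>) (last rs # butlast rs))"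
    unfolding X_def by (rule gsum_reindex[symmetric]) (rule bij_betw_rotate_compositions)
  also have "\<dots> = gsum X (\<lambda>rs. gsmul ((-1) ^ (of_bool b * N)) (T (A @ [y]) (\<alpha> @ [b]) rs))"
  proof (rule gsum_cong)
    fix rs assume "rs \<in> X"
    then obtain rs' k where rs: "rs = rs' @ [k]" "length rs' = length A" and sum: "sum_list rs' + k = N"
      by (cases rs rule: rev_cases) (auto simp: X_def compositions_def)
    then show "T (y # A) (b # \<alpha>) (last rs # butlast rs) = gsmul ((-1) ^ (of_bool b * N)) (T (A @ [y]) (\<alpha> @ [b]) rs)"
      using assms(2,3) by (simp add: T_def eps_weight_rotate multidegree_rotate gsmul_gsmul)
  qed
  also have "\<dots> = gsmul ((-1) ^ (of_bool b * N)) (hA l d r (A @ [y]) (\<alpha> @ [b]))"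
    using assms(1) by (simp only: gsum_gsmul hA_as_gsum length_append_singleton)
  finally show ?thesis unfolding N_def .
qed

section \<open>The Clifford part\<close>

lemma foldl_cmul_gen_sorted:
  "sorted xs \<Longrightarrow> distinct xs \<Longrightarrow> set xs \<inter> U = {} \<Longrightarrow>
   foldl cmul_gen (s, U) xs = (s * (-1) ^ sum_list (map (\<lambda>t. card {u\<in>U. u > t}) xs), U \<union> set xs)"
proof (induction xs arbitrary: s U)
  case Nil
  then show ?case by simp
next
  case (Cons x xs)
  have step: "cmul_gen (s, U) x = (s * (-1) ^ card {i \<in> U. i > x}, insert x U)"
    using Cons.prems by (simp add: cmul_gen_def)
  have later: "card {u \<in> insert x U. u > t} = card {u\<in>U. u > t}" if "t \<in> set xs" for t
  proof -
    from that Cons.prems have "x < t" by (auto simp: order.strict_iff_order)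
    then have "{u \<in> insert x U. u > t} = {u\<in>U. u > t}" by auto
    then show ?thesis by simp
  qed
  have "foldl cmul_gen (s, U) (x # xs)
      = foldl cmul_gen (s * (-1) ^ card {i \<in> U. i > x}, insert x U) xs"
    using step by simp
  also have "\<dots> = (s * (-1) ^ card {i \<in> U. i > x}
      * (-1) ^ sum_list (map (\<lambda>t. card {u\<in>insert x U. u > t}) xs), insert x U \<union> set xs)"
    using Cons.prems by (intro Cons.IH) auto
  also have "\<dots> = (s * (-1) ^ sum_list (map (\<lambda>t. card {u\<in>U. u > t}) (x # xs)), U \<union> set (x # xs))"
    using later by (simp add: power_add ac_simps cong: map_cong)
  finally show ?case .
qed

lemma cword_sorted_list_of_set: "finite T \<Longrightarrow> cword (sorted_list_of_set T) = (1, T)"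
  unfolding cword_def by (subst foldl_cmul_gen_sorted) auto

lemma cword_Cons_sorted_list_of_set:
  assumes "finite T" "j \<notin> T"
  shows "cword (j # sorted_list_of_set T) = ((-1) ^ card {t\<in>T. t < j}, insert j T)"
proof -
  have "sum_list (map (\<lambda>t. card {u\<in>{j}. u > t}) (sorted_list_of_set T))
      = (\<Sum>t\<in>T. card {u\<in>{j}. u > t})"
    using assms by (simp add: sum_list_distinct_conv_sum_set)
  also have "\<dots> = (\<Sum>t\<in>T. if t < j then 1 else 0)"
    by (intro sum.cong refl) (simp add: Collect_conv_if)
  also have "\<dots> = card {t\<in>T. t < j}"
    using assms by (simp add: sum.If_cases Int_def conj_commute)
  finally have "sum_list (map (\<lambda>t. card {u\<in>{j}. u > t}) (sorted_list_of_set T)) = card {t\<in>T. t < j}" .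
  moreover have "foldl cmul_gen (1, {j}) (sorted_list_of_set T)
      = ((-1) ^ sum_list (map (\<lambda>t. card {u\<in>{j}. u > t}) (sorted_list_of_set T)), insert j T)"
    using assms by (subst foldl_cmul_gen_sorted) auto
  ultimately show ?thesis
    by (simp add: cword_def cmul_gen_def)
qed

lemma valid_basis_cmono: "l \<ge> 1 \<Longrightarrow> T \<subseteq> {1..d} \<Longrightarrow> valid_basis l d (\<lambda>_. 0, id, T)"
  by (auto simp: valid_basis_def permutes_id)

lemma gmul_gc_cmono:
  assumes "l \<ge> 1" "j \<in> {1..d}" "T \<subseteq> {1..d}" "j \<notin> T"
  shows "(gmul l d (gc l d j) (gmono l d (\<lambda>_. 0, id, T)) :: 'r::comm_ring_1 gelem)
    = gsmul ((-1) ^ card {t\<in>T. t < j}) (gmono l d (\<lambda>_. 0, id, insert j T))"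
proof -
  have "finite T" using assms(3) finite_subset by blast
  then have bm: "bmul l d (\<lambda>_. 0, id, {j}) (\<lambda>_. 0, id, T)
      = Some ((-1) ^ card {t\<in>T. t < j}, (\<lambda>_. 0, id, insert j T))"
    using assms(1,4) by (simp add: bmul_def inv_id cword_Cons_sorted_list_of_set)
  have valid_j: "valid_basis l d (\<lambda>_. 0, id, {j})"
    and valid_jT: "valid_basis l d (\<lambda>_. 0, id, insert j T)"
    using valid_basis_cmono[OF assms(1)] assms(2,3) by auto
  show ?thesis
    unfolding gc_def gmul_gmono[OF valid_j valid_basis_cmono[OF assms(1,3)]] bm
    using valid_jT by (auto simp: gmono_def gsmul_def intro!: ext)
qed

lemma gmul_gone_cmono:
  assumes "l \<ge> 1" "T \<subseteq> {1..d}"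
  shows "(gmul l d (gone l d) (gmono l d (\<lambda>_. 0, id, T)) :: 'r::comm_ring_1 gelem) = gmono l d (\<lambda>_. 0, id, T)"
proof -
  have "finite T" using assms(2) finite_subset by blast
  then have "bmul l d (\<lambda>_. 0, id, {}) (\<lambda>_. 0, id, T) = Some (1, (\<lambda>_. 0, id, T))"
    using assms(1) by (simp add: bmul_def inv_id cword_sorted_list_of_set)
  then show ?thesis
    unfolding gone_def gmul_gmono[OF valid_basis_cmono[OF assms(1) empty_subsetI] valid_basis_cmono[OF assms]]
    using valid_basis_cmono[OF assms]
    by (auto simp: gmono_def intro!: ext)
qed

text \<open>\<open>select A \<alpha>\<close> lists the indices \<open>i\<^sub>j\<close> with \<open>\<alpha>\<^sub>j = 1\<close>, in the order of \<open>A\<close>; sorting the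
 factors of \<open>c\<^sub>\<alpha>(A)\<close> costs one sign per inversion of this list.\<close>
definition select :: "nat list \<Rightarrow> bool list \<Rightarrow> nat list" where
  "select A \<alpha> = map fst (filter snd (zip A \<alpha>))"

fun inversions :: "nat list \<Rightarrow> nat" where
  "inversions [] = 0"
| "inversions (x # xs) = length (filter (\<lambda>t. t < x) xs) + inversions xs"

lemma select_Cons: "select (a # A) (b # \<alpha>) = (if b then a # select A \<alpha> else select A \<alpha>)"
  by (simp add: select_def)

lemma select_snoc:
  "length A = length \<alpha> \<Longrightarrow> select (A @ [a]) (\<alpha> @ [b]) = select A \<alpha> @ (if b then [a] else [])"
  by (simp add: select_def)

lemma set_select_subset: "set (select A \<alpha>) \<subseteq> set A"
  by (auto simp: select_def dest: set_zip_leftD)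

lemma distinct_select: "distinct A \<Longrightarrow> distinct (select A \<alpha>)"
  unfolding select_def by (induction A arbitrary: \<alpha>) (auto simp: zip_Cons1 dest: set_zip_leftD split: list.split)

lemma length_select: "length A = length \<alpha> \<Longrightarrow> length (select A \<alpha>) = length (filter id \<alpha>)"
  by (induction A \<alpha> rule: list_induct2) (auto simp: select_Cons select_def)

lemma c_alpha_Cons:
  "c_alpha l d (a # A) (b # \<alpha>) = gmul l d (if b then gc l d a else gone l d) (c_alpha l d A \<alpha>)"
  unfolding c_alpha_def gprod_list_def
  by (simp add: upt_conv_Cons map_Suc_upt[symmetric] o_def del: upt_Suc,
      intro conjI impI arg_cong2[where f="gmul l d"] refl arg_cong2[where f="foldr (gmul l d)"] map_cong, auto)

lemma c_alpha_normal_form: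
  assumes "l \<ge> 1" "length A = length \<alpha>" "distinct A" "set A \<subseteq> {1..d}"
  shows "(c_alpha l d A \<alpha> :: 'r::comm_ring_1 gelem)
    = gsmul ((-1) ^ inversions (select A \<alpha>)) (gmono l d (\<lambda>_. 0, id, set (select A \<alpha>)))"
  using assms(2-4)
proof (induction A \<alpha> rule: list_induct2)
  case Nil
  then show ?case by (simp add: c_alpha_def gprod_list_def gone_def select_def gsmul_one id_def)
next
  case (Cons a A b \<alpha>)
  have IH: "(c_alpha l d A \<alpha> :: 'r gelem)
      = gsmul ((-1) ^ inversions (select A \<alpha>)) (gmono l d (\<lambda>_. 0, id, set (select A \<alpha>)))"
    using Cons by (simp add: id_def)
  have sel_range: "set (select A \<alpha>) \<subseteq> {1..d}"
    using set_select_subset Cons.prems by fastforce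
  show ?case
  proof (cases b)
    case True
    have a_new: "a \<notin> set (select A \<alpha>)" using set_select_subset Cons.prems by fastforce
    have "card {t\<in>set (select A \<alpha>). t < a} = length (filter (\<lambda>t. t < a) (select A \<alpha>))"
      using distinct_select Cons.prems by (simp add: distinct_length_filter Int_def conj_commute)
    moreover have "(gmul l d (gc l d a) (gmono l d (\<lambda>_. 0, id, set (select A \<alpha>))) :: 'r gelem)
        = gsmul ((-1) ^ card {t\<in>set (select A \<alpha>). t < a}) (gmono l d (\<lambda>_. 0, id, insert a (set (select A \<alpha>))))"
      using Cons.prems by (intro gmul_gc_cmono[OF assms(1) _ sel_range a_new]) simp
    ultimately show ?thesis
      unfolding c_alpha_Cons IH gmul_gsmul_right using True
      by (simp add: select_Cons gsmul_gsmul power_add ac_simps id_def)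
  next
    case False
    then show ?thesis
      unfolding c_alpha_Cons IH gmul_gsmul_right using gmul_gone_cmono[OF assms(1) sel_range, where 'r='r]
      by (simp add: select_Cons id_def)
  qed
qed

text \<open>Each element of \<open>xs\<close> is counted once, either on the left or on the right of \<open>y\<close>.\<close>
lemma inversions_rotate:
  assumes "y \<notin> set xs"
  shows "((-1::'r::comm_ring_1) ^ inversions (y # xs)) = (-1) ^ (length xs + inversions (xs @ [y]))"
proof -
  have "inversions (xs @ [y]) = inversions xs + length (filter (\<lambda>t. \<not> t < y) xs)"
    using assms by (induction xs) (auto simp: linorder_not_less order.order_iff_strict)
  then have "inversions (y # xs) + (length xs + inversions (xs @ [y])) = 2 * (length xs + inversions xs)"
    using sum_length_filter_compl[of "\<lambda>t. t < y" xs] by simp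
  then show ?thesis
    by (metis (no_types, lifting) even_add dvd_triv_left neg_one_even_power neg_one_odd_power)
qed

lemma c_alpha_rotate:
  assumes "l \<ge> 1" "distinct (A @ [y])" "set (A @ [y]) \<subseteq> {1..d}" "length \<alpha> = length A"
    "even (length (filter id (\<alpha> @ [b])))"
  shows "(c_alpha l d (y # A) (b # \<alpha>) :: 'r::comm_ring_1 gelem)
    = gsmul ((-1) ^ of_bool b) (c_alpha l d (A @ [y]) (\<alpha> @ [b]))"
proof -
  have "length (y # A) = length (b # \<alpha>)" "length (A @ [y]) = length (\<alpha> @ [b])"
    "distinct (y # A)" "set (y # A) \<subseteq> {1..d}"
    using assms by auto
  note normal_forms = c_alpha_normal_form[OF assms(1) this(1,3,4)]
    c_alpha_normal_form[OF assms(1) this(2) assms(2,3)]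
  show ?thesis
  proof (cases b)
    case True
    have "y \<notin> set (select A \<alpha>)" using set_select_subset assms(2) by fastforce
    moreover have "odd (length (select A \<alpha>))" using assms(4,5) True by (simp add: length_select)
    ultimately have "((-1::'r) ^ inversions (y # select A \<alpha>)) = - ((-1) ^ inversions (select A \<alpha> @ [y]))"
      by (simp only: inversions_rotate[OF \<open>y \<notin> set (select A \<alpha>)\<close>] power_add) simp
    then show ?thesis
      unfolding normal_forms using True assms(4) by (simp add: select_Cons select_snoc gsmul_gsmul)
  next
    case False
    then show ?thesis
      unfolding normal_forms using assms(4) by (simp add: select_Cons select_snoc gsmul_one)
  qed
qed

theorem mainTheorem12:
  fixes l d r :: nat and A :: "nat list" and \<alpha> :: "bool list"
  assumes "l \<ge> 1" "d \<ge> 1"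
    and "distinct A" "set A \<subseteq> {1..d}" "length A \<ge> 1"
    and "length \<alpha> = length A" "even (length (filter id \<alpha>))"
  shows "(Apow l d r (last A # butlast A) (last \<alpha> # butlast \<alpha>) :: 'r::comm_ring_1 gelem)
     = gsmul ((-1) ^ (of_bool (last \<alpha>) * ((length A - 1) * (l - 1) + r + 1))) (Apow l d r A \<alpha>)"
proof -
  obtain A' y where A: "A = A' @ [y]"
    using assms(5) by (cases A rule: rev_cases) auto
  obtain \<alpha>' b where \<alpha>: "\<alpha> = \<alpha>' @ [b]"
    using assms(5,6) by (cases \<alpha> rule: rev_cases) auto
  have len: "length \<alpha>' = length A'" using assms(6) A \<alpha> by simp
  have "cycle_of_list (y # A') = cycle_of_list (A' @ [y])"
    using cycle_of_list_rotate_independent[of "y # A'" 1] assms(3) A by simp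
  then have "(Apow l d r (y # A') (b # \<alpha>') :: 'r gelem)
     = gsmul ((-1) ^ (of_bool b * (length A' * (l - 1) + r)) * (-1) ^ of_bool b) (Apow l d r (A' @ [y]) (\<alpha>' @ [b]))"
    using assms A \<alpha> len unfolding Apow_def
    by (simp add: hA_rotate c_alpha_rotate gmul_gsmul_left gmul_gsmul_right gsmul_gsmul)
  then show ?thesis
    using A \<alpha> by (simp add: power_add distrib_left)
qed

end
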